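(* Let $\mathcal{V}=\{V_1,\ldots,V_n\}$ be a finite set of variables and $\mathbb{I}\in\{\mathbb{Z},\mathbb{Q},\mathbb{R}\}$. Let $(\mathcal{D}^\sharp,\gamma)$ be a numerical abstract domain with concretization $\gamma:\mathcal{D}^\sharp\to\mathcal{P}(\mathcal{V}\to\mathbb{I})$ equipped with sound abstract transfer functions, i.e. for every instruction $\mathit{inst}$ (assignment or test) and every $X^\sharp\in\mathcal{D}^\sharp$, $\{\!|\mathit{inst}|\!\}(\gamma(X^\sharp))\subseteq\gamma(\{\!|\mathit{inst}|\!\}^\sharp(X^\sharp))$. Let $R^\sharp\in\mathcal{D}^\sharp$, let $V\in\mathcal{V}$, let $\bowtie\,\in\{=,\neq,<,\leq,\geq,>\}$, and let $e,e'$ be expressions such that $\gamma(R^\sharp)\models e\preceq e'$. Then (i) $\{\!|V\leftarrow e|\!\}(\gamma(R^\sharp))\subseteq\gamma(\{\!|V\leftarrow e'|\!\}^\sharp(R^\sharp))$, and (ii) $\{\!|e\bowtie 0\,?|\!\}(\gamma(R^\sharp))\subseteq\gamma(\{\!|e'\bowtie 0\,?|\!\}^\sharp(R^\sharp))$.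
   Context: Expressions are generated by: a variable $X\in\mathcal{V}$; an interval constant $[a,b]$ with $a\in\mathbb{I}\cup\{-\infty\}$, $b\in\mathbb{I}\cup\{+\infty\}$, $a\leq b$; or $e_1\diamond e_2$ with $\diamond\in\{+,-,\times,/\}$. An environment is a map $\rho:\mathcal{V}\to\mathbb{I}$. The semantics $[\![e]\!](\rho)\subseteq\mathbb{I}$ is: $[\![X]\!](\rho)=\{\rho(X)\}$; $[\![[a,b]]\!](\rho)=\{x\in\mathbb{I}\mid a\leq x\leq b\}$; $[\![e_1\diamond e_2]\!](\rho)=\{x\diamond y\mid x\in[\![e_1]\!](\rho),y\in[\![e_2]\!](\rho)\}$ for $\diamond\in\{+,-,\times\}$; $[\![e_1/e_2]\!](\rho)=\{x/y\mid x\in[\![e_1]\!](\rho),y\in[\![e_2]\!](\rho),y\neq0\}$ if $\mathbb{I}\neq\mathbb{Z}$, and $\{\mathit{truncate}(x/y)\mid \ldots, y\neq 0\}$ (rounding towards zero) if $\mathbb{I}=\mathbb{Z}$. Concrete transfer functions on sets $R$ of environments: $\{\!|X\leftarrow e|\!\}(R)=\{\rho[X\mapsto v]\mid\rho\in R,\ v\in[\![e]\!](\rho)\}$ (where $\rho[X\mapsto v]$ agrees with $\rho$ except it maps $X$ to $v$), and $\{\!|e\bowtie0\,?|\!\}(R)=\{\rho\in R\mid\exists v\in[\![e]\!](\rho),\ v\bowtie 0\}$. For a set $R$ of environments, $R\models e_1\preceq e_2$ means $\forall\rho\in R,\ [\![e_1]\!](\rho)\subseteq[\![e_2]\!](\rho)$.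 *)

theory Defs
  imports Complex_Main
begin

text \<open>Numeric domains I: Z (truncating division), Q, R (field division).
  The class below fixes the division operation used by the semantics; it is
  instantiated exactly for int, rat and real.\<close>

class num_dom = linordered_idom +
  fixes ddiv :: "'a \<Rightarrow> 'a \<Rightarrow> 'a"

instantiation int :: num_dom
begin
definition ddiv_int :: "int \<Rightarrow> int \<Rightarrow> int" where
  "ddiv_int x y = sgn x * sgn y * (\<bar>x\<bar> div \<bar>y\<bar>)"
instance ..
end

instantiation rat :: num_dom
begin
definition ddiv_rat :: "rat \<Rightarrow> rat \<Rightarrow> rat" where
  "ddiv_rat x y = x / y"
instance ..
end

instantiation real :: num_dom
begin
definition ddiv_real :: "real \<Rightarrow> real \<Rightarrow> real" where
  "ddiv_real x y = x / y"
instance ..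
end

datatype binop = Add | Sub | Mul | Div

text \<open>Interval constant [a,b]: None as lower bound means -infinity,
  None as upper bound means +infinity.\<close>
datatype ('v, 'i) expr =
    Var 'v
  | Itv "'i option" "'i option"
  | Bin binop "('v, 'i) expr" "('v, 'i) expr"

fun wf_expr :: "('v, 'i::linorder) expr \<Rightarrow> bool" where
  "wf_expr (Var X) = True"
| "wf_expr (Itv (Some a) (Some b)) = (a \<le> b)"
| "wf_expr (Itv _ _) = True"
| "wf_expr (Bin op e1 e2) = (wf_expr e1 \<and> wf_expr e2)"

definition in_itv :: "'i option \<Rightarrow> 'i option \<Rightarrow> 'i::linorder \<Rightarrow> bool" where
  "in_itv a b x = ((case a of None \<Rightarrow> True | Some a' \<Rightarrow> a' \<le> x) \<and>
                   (case b of None \<Rightarrow> True | Some b' \<Rightarrow> x \<le> b'))"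

fun sem :: "('v, 'i::num_dom) expr \<Rightarrow> ('v \<Rightarrow> 'i) \<Rightarrow> 'i set" where
  "sem (Var X) \<rho> = {\<rho> X}"
| "sem (Itv a b) \<rho> = {x. in_itv a b x}"
| "sem (Bin Add e1 e2) \<rho> = {x + y | x y. x \<in> sem e1 \<rho> \<and> y \<in> sem e2 \<rho>}"
| "sem (Bin Sub e1 e2) \<rho> = {x - y | x y. x \<in> sem e1 \<rho> \<and> y \<in> sem e2 \<rho>}"
| "sem (Bin Mul e1 e2) \<rho> = {x * y | x y. x \<in> sem e1 \<rho> \<and> y \<in> sem e2 \<rho>}"
| "sem (Bin Div e1 e2) \<rho> = {ddiv x y | x y. x \<in> sem e1 \<rho> \<and> y \<in> sem e2 \<rho> \<and> y \<noteq> 0}"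

datatype cmp = CEq | CNeq | CLt | CLe | CGe | CGt

fun cmp_eval :: "cmp \<Rightarrow> 'i::linorder \<Rightarrow> 'i \<Rightarrow> bool" where
  "cmp_eval CEq x y = (x = y)"
| "cmp_eval CNeq x y = (x \<noteq> y)"
| "cmp_eval CLt x y = (x < y)"
| "cmp_eval CLe x y = (x \<le> y)"
| "cmp_eval CGe x y = (x \<ge> y)"
| "cmp_eval CGt x y = (x > y)"

datatype ('v, 'i) inst = Assign 'v "('v, 'i) expr" | Test "('v, 'i) expr" cmp

fun wf_inst :: "('v, 'i::linorder) inst \<Rightarrow> bool" where
  "wf_inst (Assign X e) = wf_expr e"
| "wf_inst (Test e c) = wf_expr e"

fun post :: "('v, 'i::num_dom) inst \<Rightarrow> ('v \<Rightarrow> 'i) set \<Rightarrow> ('v \<Rightarrow> 'i) set" where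
  "post (Assign X e) R = {\<rho>(X := v) | \<rho> v. \<rho> \<in> R \<and> v \<in> sem e \<rho>}"
| "post (Test e c) R = {\<rho> \<in> R. \<exists>v \<in> sem e \<rho>. cmp_eval c v 0}"

definition approx :: "('v \<Rightarrow> 'i::num_dom) set \<Rightarrow> ('v, 'i) expr \<Rightarrow> ('v, 'i) expr \<Rightarrow> bool" where
  "approx R e1 e2 = (\<forall>\<rho> \<in> R. sem e1 \<rho> \<subseteq> sem e2 \<rho>)"

definition sound_domain ::
  "('d \<Rightarrow> ('v \<Rightarrow> 'i::num_dom) set) \<Rightarrow> (('v, 'i) inst \<Rightarrow> 'd \<Rightarrow> 'd) \<Rightarrow> bool" where
  "sound_domain \<gamma> absf = (\<forall>i X. wf_inst i \<longrightarrow> post i (\<gamma> X) \<subseteq> \<gamma> (absf i X))"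

end

theory Submission
  imports Defs
begin

lemma sound_domainD:
  assumes "sound_domain \<gamma> absf" and "wf_inst i"
  shows "post i (\<gamma> X) \<subseteq> \<gamma> (absf i X)"
  using assms unfolding sound_domain_def by blast

lemma post_Assign_mono_expr:
  assumes "approx R e e'"
  shows "post (Assign V e) R \<subseteq> post (Assign V e') R"
  using assms unfolding approx_def by auto

lemma post_Test_mono_expr:
  assumes "approx R e e'"
  shows "post (Test e c) R \<subseteq> post (Test e' c) R"
  using assms unfolding approx_def by auto

theorem theorem1:
  fixes \<gamma> :: "'d \<Rightarrow> ('v::finite \<Rightarrow> 'i::num_dom) set"
    and absf :: "('v, 'i) inst \<Rightarrow> 'd \<Rightarrow> 'd"
    and R :: 'd and V :: 'v and c :: cmp
    and e e' :: "('v, 'i) expr"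
  assumes "sound_domain \<gamma> absf"
    and "wf_expr e" and "wf_expr e'"
    and "approx (\<gamma> R) e e'"
  shows "post (Assign V e) (\<gamma> R) \<subseteq> \<gamma> (absf (Assign V e') R) \<and>
         post (Test e c) (\<gamma> R) \<subseteq> \<gamma> (absf (Test e' c) R)"
proof
  have "wf_inst (Assign V e')" and "wf_inst (Test e' c)"
    using \<open>wf_expr e'\<close> by simp_all
  then show "post (Assign V e) (\<gamma> R) \<subseteq> \<gamma> (absf (Assign V e') R)"
    and "post (Test e c) (\<gamma> R) \<subseteq> \<gamma> (absf (Test e' c) R)"
    using post_Assign_mono_expr[OF assms(4)] post_Test_mono_expr[OF assms(4)]
      sound_domainD[OF assms(1)] by (meson subset_trans)+
qed

end
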